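(* Let $E$, $D$, $S$ be binary random variables taking values in $\{0,1\}$ such that every joint cell probability $P(E=e,D=d,S=s)$ is positive, and write $p(d,e)=P(S=1\mid D=d,E=e)$. Suppose there is no interaction of $E$ and $D$ on $S$ on the risk difference scale, i.e. $\mathrm{RD}_{ES\mid D=1}=\mathrm{RD}_{ES\mid D=0}$ (equivalently $p(1,1)-p(1,0)=p(0,1)-p(0,0)$). (a) If $p(d,e)$ is non-decreasing in both $d$ and $e$, or non-increasing in both $d$ and $e$, then $\mathrm{OR}_{ED\mid S=1}\le \mathrm{OR}_{ED}$. (b) If $p(d,e)$ is non-decreasing in one of $d,e$ and non-increasing in the other, then $\mathrm{OR}_{ED\mid S=1}\ge \mathrm{OR}_{ED}$.
   Context: For binary random variables $A,B$ and a random variable $C$, $\mathrm{OR}_{AB\mid C=c}=\frac{P(A=1,B=1\mid C=c)P(A=0,B=0\mid C=c)}{P(A=1,B=0\mid C=c)P(A=0,B=1\mid C=c)}$, $\mathrm{OR}_{AB}$ is the unconditional version, and $\mathrm{RD}_{AB\mid C=c}=P(B=1\mid A=1,C=c)-P(B=1\mid A=0,C=c)$. "Non-decreasing in $d$" means $p(1,e)\ge p(0,e)$ for each $e$; "non-decreasing in $e$" means $p(d,1)\ge p(d,0)$ for each $d$; non-increasing analogously. *)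

theory Defs
  imports Complex_Main
begin

text \<open>A joint distribution of three binary random variables (E,D,S) is represented by
its cell probabilities q e d s = P(E=e, D=d, S=s), with True encoding 1 and False encoding 0.\<close>

definition joint_pos_dist :: "(bool \<Rightarrow> bool \<Rightarrow> bool \<Rightarrow> real) \<Rightarrow> bool" where
  "joint_pos_dist q \<longleftrightarrow> (\<forall>e d s. q e d s > 0) \<and> (\<Sum>e\<in>UNIV. \<Sum>d\<in>UNIV. \<Sum>s\<in>UNIV. q e d s) = 1"

definition pS :: "(bool \<Rightarrow> bool \<Rightarrow> bool \<Rightarrow> real) \<Rightarrow> bool \<Rightarrow> bool \<Rightarrow> real" where
  "pS q d e = q e d True / (q e d True + q e d False)"

definition OR_ED_given_S1 :: "(bool \<Rightarrow> bool \<Rightarrow> bool \<Rightarrow> real) \<Rightarrow> real" where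
  "OR_ED_given_S1 q =
     ((q True True True / (\<Sum>e\<in>UNIV. \<Sum>d\<in>UNIV. q e d True)) * (q False False True / (\<Sum>e\<in>UNIV. \<Sum>d\<in>UNIV. q e d True)))
   / ((q True False True / (\<Sum>e\<in>UNIV. \<Sum>d\<in>UNIV. q e d True)) * (q False True True / (\<Sum>e\<in>UNIV. \<Sum>d\<in>UNIV. q e d True)))"

definition pED :: "(bool \<Rightarrow> bool \<Rightarrow> bool \<Rightarrow> real) \<Rightarrow> bool \<Rightarrow> bool \<Rightarrow> real" where
  "pED q e d = (\<Sum>s\<in>UNIV. q e d s)"

definition OR_ED :: "(bool \<Rightarrow> bool \<Rightarrow> bool \<Rightarrow> real) \<Rightarrow> real" where
  "OR_ED q = (pED q True True * pED q False False) / (pED q True False * pED q False True)"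

end

theory Submission
  imports Defs
begin

text \<open>Writing q(e,d,1) = p(d,e) n(e,d) with n(e,d) = P(E=e,D=d), the conditional odds ratio
  factors as OR_{ED|S=1} = OR_{ED} \<cdot> p(1,1)p(0,0) / (p(0,1)p(1,0)). Under additivity
  p(1,1) + p(0,0) = p(0,1) + p(1,0) one has
  p(1,1)p(0,0) - p(0,1)p(1,0) = -(p(1,0) - p(0,0))(p(0,1) - p(0,0)),
  so the comparison of the two odds ratios is decided by the sign of the product of the two
  main effects of D and E on S.\<close>

lemma joint_pos_dist_cell_pos:
  "joint_pos_dist q \<Longrightarrow> q e d s > 0"
  unfolding joint_pos_dist_def by blast

lemma joint_pos_dist_pS_pos:
  "joint_pos_dist q \<Longrightarrow> pS q d e > 0"
  using joint_pos_dist_cell_pos[of q e d] by (simp add: pS_def add_pos_pos)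

lemma joint_pos_dist_pED_pos:
  "joint_pos_dist q \<Longrightarrow> pED q e d > 0"
  using joint_pos_dist_cell_pos[of q e d] by (simp add: pED_def UNIV_bool add_pos_pos)

lemma joint_pos_dist_OR_ED_pos:
  "joint_pos_dist q \<Longrightarrow> OR_ED q > 0"
  using joint_pos_dist_pED_pos[of q] by (simp add: OR_ED_def)

lemma OR_ED_given_S1_eq:
  assumes "joint_pos_dist q"
  shows "OR_ED_given_S1 q
    = (pS q True True * pS q False False) / (pS q False True * pS q True False) * OR_ED q"
proof -
  have "q e d True = pS q d e * pED q e d" for e d
    using joint_pos_dist_pED_pos[OF assms, of e d]
    by (simp add: pS_def pED_def UNIV_bool add.commute)
  moreover have "(\<Sum>e\<in>UNIV. \<Sum>d\<in>UNIV. q e d True) > 0"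
    using joint_pos_dist_cell_pos[OF assms] by (simp add: UNIV_bool add_pos_pos)
  ultimately show ?thesis
    using joint_pos_dist_pED_pos[OF assms]
    unfolding OR_ED_given_S1_def OR_ED_def by (simp add: field_simps)
qed

lemma additive_cross_difference:
  fixes a b c d :: "'a::comm_ring"
  assumes "a + d = b + c"
  shows "a * d - b * c = - ((c - d) * (b - d))"
proof -
  have "a * d - b * c + (c - d) * (b - d) = (a + d - (b + c)) * d"
    by (simp add: algebra_simps)
  with assms show ?thesis
    by (simp add: eq_neg_iff_add_eq_0)
qed

lemma divide_mult_le_self_iff:
  fixes x y r :: real
  assumes "y > 0" "r > 0"
  shows "x / y * r \<le> r \<longleftrightarrow> x \<le> y"
  using assms by (simp add: mult_le_cancel_right_pos divide_le_eq)

lemma self_le_divide_mult_iff: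
  fixes x y r :: real
  assumes "y > 0" "r > 0"
  shows "r \<le> x / y * r \<longleftrightarrow> y \<le> x"
  using assms by (simp add: mult_le_cancel_right_pos le_divide_eq)

theorem mainTheorem3:
  fixes q :: "bool \<Rightarrow> bool \<Rightarrow> bool \<Rightarrow> real"
  assumes dist: "joint_pos_dist q"
    and noint: "pS q True True - pS q True False = pS q False True - pS q False False"
  shows "((((\<forall>e. pS q True e \<ge> pS q False e) \<and> (\<forall>d. pS q d True \<ge> pS q d False))
          \<or> ((\<forall>e. pS q True e \<le> pS q False e) \<and> (\<forall>d. pS q d True \<le> pS q d False)))
           \<longrightarrow> OR_ED_given_S1 q \<le> OR_ED q)
     \<and> ((((\<forall>e. pS q True e \<ge> pS q False e) \<and> (\<forall>d. pS q d True \<le> pS q d False))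
          \<or> ((\<forall>e. pS q True e \<le> pS q False e) \<and> (\<forall>d. pS q d True \<ge> pS q d False)))
           \<longrightarrow> OR_ED_given_S1 q \<ge> OR_ED q)"
proof -
  let ?p = "pS q"
  have cross: "?p True True * ?p False False - ?p False True * ?p True False
      = - ((?p True False - ?p False False) * (?p False True - ?p False False))"
    by (rule additive_cross_difference) (use noint in linarith)
  have "0 < ?p False True * ?p True False"
    using joint_pos_dist_pS_pos[OF dist] by simp
  note compare = OR_ED_given_S1_eq[OF dist]
    divide_mult_le_self_iff[OF this joint_pos_dist_OR_ED_pos[OF dist]]
    self_le_divide_mult_iff[OF this joint_pos_dist_OR_ED_pos[OF dist]]
  show ?thesis
    unfolding compare
  proof (intro conjI impI)
    assume "((\<forall>e. ?p True e \<ge> ?p False e) \<and> (\<forall>d. ?p d True \<ge> ?p d False))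
      \<or> ((\<forall>e. ?p True e \<le> ?p False e) \<and> (\<forall>d. ?p d True \<le> ?p d False))"
    then have "0 \<le> (?p True False - ?p False False) * (?p False True - ?p False False)"
      by (auto simp: zero_le_mult_iff)
    then show "?p True True * ?p False False \<le> ?p False True * ?p True False"
      using cross by linarith
  next
    assume "((\<forall>e. ?p True e \<ge> ?p False e) \<and> (\<forall>d. ?p d True \<le> ?p d False))
      \<or> ((\<forall>e. ?p True e \<le> ?p False e) \<and> (\<forall>d. ?p d True \<ge> ?p d False))"
    then have "(?p True False - ?p False False) * (?p False True - ?p False False) \<le> 0"
      by (auto simp: mult_le_0_iff)
    then show "?p False True * ?p True False \<le> ?p True True * ?p False False"
      using cross by linarith
  qed
qed

end
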